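(* Let $P$ be a finite $(3+1)$-free poset and let $I^P_{\mathrm{plac}}$ be the two-sided ideal of $\mathcal{U}_P$ defined below. Then for all integers $k,\ell$ and all subsets $S\subseteq P$, $$e^P_k(\mathbf{u}_S)\,e^P_\ell(\mathbf{u}_S)\equiv e^P_\ell(\mathbf{u}_S)\,e^P_k(\mathbf{u}_S)\pmod{I^P_{\mathrm{plac}}}.$$
   Context: A poset is $(3+1)$-free if it has no induced subposet isomorphic to the disjoint union of a 3-element chain and a 1-element chain. For $a,b\in P$ write $a<_P b$ if $a$ is strictly less than $b$, and $a\sim_P b$ if $a,b$ are incomparable or equal. $\mathcal{U}_P=\mathbb{Z}\langle u_a : a\in P\rangle$ is the free associative ring on noncommuting variables $u_a$. For $S\subseteq P$ and $k\in\mathbb{Z}$, $e^P_k(\mathbf{u}_S)=\sum u_{a_1}u_{a_2}\cdots u_{a_k}$, summed over all $a_1,\dots,a_k\in S$ with $a_1>_P a_2>_P\cdots>_P a_k$; by convention $e^P_0(\mathbf{u}_S)=1$ (even if $S=\varnothing$) and $e^P_k(\mathbf{u}_S)=0$ for $k<0$ or $k>|S|$. $I^P_{\mathrm{plac}}$ is the two-sided ideal generated by: (1) $u_bu_au_c-u_bu_cu_a$ whenever $a<_P b$, $c\not<_P b$ and $a<_P c$; (2) $u_cu_au_b-u_au_cu_b$ whenever $b\not<_P a$, $b<_P c$ and $a<_P c$; (3) $u_cu_au_b-u_bu_cu_a$ whenever $a\sim_P b$, $b\sim_P c$ and $a<_P c$. *)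

theory Defs
  imports Main
begin

definition strict_poset :: "'a set \<Rightarrow> ('a \<Rightarrow> 'a \<Rightarrow> bool) \<Rightarrow> bool" where
  "strict_poset P lt \<longleftrightarrow>
     (\<forall>a\<in>P. \<not> lt a a) \<and>
     (\<forall>a\<in>P. \<forall>b\<in>P. \<forall>c\<in>P. lt a b \<longrightarrow> lt b c \<longrightarrow> lt a c)"

text \<open>a ~_P b: incomparable or equal.\<close>
definition incomp :: "('a \<Rightarrow> 'a \<Rightarrow> bool) \<Rightarrow> 'a \<Rightarrow> 'a \<Rightarrow> bool" where
  "incomp lt a b \<longleftrightarrow> \<not> lt a b \<and> \<not> lt b a"

text \<open>(3+1)-free: no a <_P b <_P c together with d incomparable to all of a, b, c
  (d is then automatically distinct from a, b, c).\<close>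
definition three_one_free :: "'a set \<Rightarrow> ('a \<Rightarrow> 'a \<Rightarrow> bool) \<Rightarrow> bool" where
  "three_one_free P lt \<longleftrightarrow>
     \<not> (\<exists>a\<in>P. \<exists>b\<in>P. \<exists>c\<in>P. \<exists>d\<in>P. lt a b \<and> lt b c \<and>
          d \<noteq> a \<and> d \<noteq> b \<and> d \<noteq> c \<and>
          incomp lt d a \<and> incomp lt d b \<and> incomp lt d c)"

text \<open>Elements of the free associative ring Z<u_a> are represented by their coefficient
  function on words (lists of letters); genuine ring elements have finite support.\<close>
type_synonym 'a ncpoly = "'a list \<Rightarrow> int"

definition nc_finite :: "'a ncpoly \<Rightarrow> bool" where
  "nc_finite f \<longleftrightarrow> finite {w. f w \<noteq> 0}"

definition nc_zero :: "'a ncpoly" where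
  "nc_zero = (\<lambda>w. 0)"

definition nc_add :: "'a ncpoly \<Rightarrow> 'a ncpoly \<Rightarrow> 'a ncpoly" where
  "nc_add f g = (\<lambda>w. f w + g w)"

definition nc_sub :: "'a ncpoly \<Rightarrow> 'a ncpoly \<Rightarrow> 'a ncpoly" where
  "nc_sub f g = (\<lambda>w. f w - g w)"

definition nc_mult :: "'a ncpoly \<Rightarrow> 'a ncpoly \<Rightarrow> 'a ncpoly" where
  "nc_mult f g = (\<lambda>w. \<Sum>i\<le>length w. f (take i w) * g (drop i w))"

definition nc_mono :: "'a list \<Rightarrow> 'a ncpoly" where
  "nc_mono v = (\<lambda>w. if w = v then 1 else 0)"

inductive_set nc_ideal :: "'a ncpoly set \<Rightarrow> 'a ncpoly set" for G where
  gen: "g \<in> G \<Longrightarrow> g \<in> nc_ideal G"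
| zero: "nc_zero \<in> nc_ideal G"
| add: "f \<in> nc_ideal G \<Longrightarrow> g \<in> nc_ideal G \<Longrightarrow> nc_add f g \<in> nc_ideal G"
| lmult: "nc_finite x \<Longrightarrow> f \<in> nc_ideal G \<Longrightarrow> nc_mult x f \<in> nc_ideal G"
| rmult: "nc_finite x \<Longrightarrow> f \<in> nc_ideal G \<Longrightarrow> nc_mult f x \<in> nc_ideal G"

definition plac_gens :: "'a set \<Rightarrow> ('a \<Rightarrow> 'a \<Rightarrow> bool) \<Rightarrow> 'a ncpoly set" where
  "plac_gens P lt =
     {nc_sub (nc_mono [b, a, c]) (nc_mono [b, c, a]) | a b c.
        a \<in> P \<and> b \<in> P \<and> c \<in> P \<and> lt a b \<and> \<not> lt c b \<and> lt a c}
   \<union> {nc_sub (nc_mono [c, a, b]) (nc_mono [a, c, b]) | a b c.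
        a \<in> P \<and> b \<in> P \<and> c \<in> P \<and> \<not> lt b a \<and> lt b c \<and> lt a c}
   \<union> {nc_sub (nc_mono [c, a, b]) (nc_mono [b, c, a]) | a b c.
        a \<in> P \<and> b \<in> P \<and> c \<in> P \<and> incomp lt a b \<and> incomp lt b c \<and> lt a c}"

definition I_plac :: "'a set \<Rightarrow> ('a \<Rightarrow> 'a \<Rightarrow> bool) \<Rightarrow> 'a ncpoly set" where
  "I_plac P lt = nc_ideal (plac_gens P lt)"

text \<open>e^P_k(u_S): sum of u_{a1}...u_{ak} over a1 >_P a2 >_P ... >_P ak in S.
  For k < 0 the length condition is never met (so 0); for k = 0 this is the empty word, i.e. 1.\<close>
definition elem_sym :: "('a \<Rightarrow> 'a \<Rightarrow> bool) \<Rightarrow> int \<Rightarrow> 'a set \<Rightarrow> 'a ncpoly" where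
  "elem_sym lt k S = (\<lambda>w. if int (length w) = k \<and> set w \<subseteq> S \<and> sorted_wrt (\<lambda>x y. lt y x) w
                          then 1 else 0)"

end

theory Submission
  imports Defs "HOL-Library.Poly_Mapping"
begin

text \<open>
  Write e_k(T) for the sum of the decreasing chains of length k in T and argue by induction
  on S, grouping chains by their first (largest) letter. Let u be maximal in S.

  If u is the maximum of S, then e_k(S) = e_k(S') + u_u e_{k-1}(S') with S' = S - {u}.
  Relation (1) moves u_u through e(S') from the right, leaving only commutators
  [u_d, u_u] for d in S'; relation (2) lets these act on all of e(S') instead of on the chains
  below d, so the expansion of e_p(S) e_q(S) is symmetric in p, q by induction.

  Otherwise S has a second maximal element v, and e(S) splits into the chains avoiding u and v
  and those starting at u or at v; by induction only the cross terms between the last two need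
  to be symmetric. Relation (3) exchanges u_u and u_v around the chains that start below u but
  not below v, and (3+1)-freeness forces all these starting points, for u and for v alike,
  to have one and the same down-set; everything then reduces to smaller sets.
\<close>

section \<open>The free ring and the ideal\<close>

text \<open>Lists under concatenation, wrapped so that they become a \<open>monoid_add\<close>; then
  \<open>'a free_word \<Rightarrow>\<^sub>0 int\<close> is the free ring \<open>\<int>\<langle>u\<^sub>a\<rangle>\<close> with its \<open>ring_1\<close> structure
  from \<open>Poly_Mapping\<close>.\<close>

datatype 'a free_word = Word (letters: "'a list")

instantiation free_word :: (type) monoid_add
begin

definition zero_free_word :: "'a free_word" where
  "0 = Word []"

definition plus_free_word :: "'a free_word \<Rightarrow> 'a free_word \<Rightarrow> 'a free_word" where
  "x + y = Word (letters x @ letters y)"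

instance
  by standard (auto simp: zero_free_word_def plus_free_word_def intro: free_word.expand)

end

lemma Word_plus_Word [simp]: "Word v + Word w = Word (v @ w)"
  by (simp add: plus_free_word_def)

type_synonym 'a free_ring = "'a free_word \<Rightarrow>\<^sub>0 int"

definition coeff_fun :: "'a free_ring \<Rightarrow> 'a ncpoly" where
  "coeff_fun x = (\<lambda>w. Poly_Mapping.lookup x (Word w))"

definition monomial :: "'a list \<Rightarrow> 'a free_ring" where
  "monomial w = Poly_Mapping.single (Word w) 1"

definition letter :: "'a \<Rightarrow> 'a free_ring" where
  "letter a = monomial [a]"

lemma monomial_Nil [simp]: "monomial [] = 1"
  by (simp add: monomial_def zero_free_word_def[symmetric])

lemma monomial_Cons: "monomial (a # w) = letter a * monomial w"
  by (simp add: letter_def monomial_def mult_single)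

lemma letter_mult_3: "letter a * letter b * letter c = monomial [a, b, c]"
  by (simp add: monomial_Cons mult.assoc)

lemma nc_finite_coeff_fun: "nc_finite (coeff_fun x)"
proof -
  have "{w. coeff_fun x w \<noteq> 0} \<subseteq> letters ` Poly_Mapping.keys x"
    by (auto simp: coeff_fun_def in_keys_iff intro: image_eqI[where x = "Word _"])
  then show ?thesis
    unfolding nc_finite_def by (rule finite_subset) simp
qed

lemma coeff_fun_zero: "coeff_fun 0 = nc_zero"
  by (simp add: coeff_fun_def nc_zero_def)

lemma coeff_fun_add: "coeff_fun (x + y) = nc_add (coeff_fun x) (coeff_fun y)"
  by (simp add: coeff_fun_def nc_add_def lookup_add)

lemma coeff_fun_diff: "coeff_fun (x - y) = nc_sub (coeff_fun x) (coeff_fun y)"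
  by (simp add: coeff_fun_def nc_sub_def lookup_minus)

lemma coeff_fun_monomial: "coeff_fun (monomial w) = nc_mono w"
  by (auto simp: coeff_fun_def nc_mono_def monomial_def lookup_single when_def)

lemma sum_when_Word_append:
  "(\<Sum>q. Poly_Mapping.lookup y q when Word w = Word v + q) =
     (if take (length v) w = v then Poly_Mapping.lookup y (Word (drop (length v) w)) else 0)"
proof -
  have "(Poly_Mapping.lookup y q when Word w = Word v + q) =
        (if take (length v) w = v \<and> q = Word (drop (length v) w)
         then Poly_Mapping.lookup y q else 0)" for q
    by (cases q) (auto simp: when_def append_eq_conv_conj, metis append_take_drop_id)
  then show ?thesis
    by simp
qed

lemma coeff_fun_mult: "coeff_fun (x * y) = nc_mult (coeff_fun x) (coeff_fun y)"
proof
  fix w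
  define f where
    "f p = Poly_Mapping.lookup x p * (\<Sum>q. Poly_Mapping.lookup y q when Word w = p + q)" for p
  have prefixes: "{p. f p \<noteq> 0} \<subseteq> (\<lambda>i. Word (take i w)) ` {..length w}"
  proof
    fix p assume "p \<in> {p. f p \<noteq> 0}"
    then have prefix: "take (length (letters p)) w = letters p"
      by (cases p) (auto simp: f_def sum_when_Word_append split: if_splits)
    then have "length (letters p) \<le> length w"
      by (metis length_take min.cobounded2 min.commute)
    with prefix show "p \<in> (\<lambda>i. Word (take i w)) ` {..length w}"
      by (cases p) (auto intro!: image_eqI[where x = "length (letters p)"])
  qed
  have inj: "inj_on (\<lambda>i. Word (take i w)) {..length w}"
    by (rule inj_onI) (metis atMost_iff free_word.inject length_take min.absorb2)
  have "coeff_fun (x * y) w = Sum_any f"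
    by (simp add: coeff_fun_def lookup_mult f_def)
  also have "\<dots> = sum f ((\<lambda>i. Word (take i w)) ` {..length w})"
    by (rule Sum_any.expand_superset) (simp_all add: prefixes)
  also have "\<dots> = (\<Sum>i\<le>length w. f (Word (take i w)))"
    by (rule sum.reindex[OF inj, unfolded comp_def])
  also have "\<dots> = nc_mult (coeff_fun x) (coeff_fun y) w"
    by (simp add: nc_mult_def coeff_fun_def f_def sum_when_Word_append min.absorb2)
  finally show "coeff_fun (x * y) w = nc_mult (coeff_fun x) (coeff_fun y) w" .
qed

inductive_set plac_ideal :: "'a set \<Rightarrow> ('a \<Rightarrow> 'a \<Rightarrow> bool) \<Rightarrow> 'a free_ring set"
  for P lt where
  rel1: "a \<in> P \<Longrightarrow> b \<in> P \<Longrightarrow> c \<in> P \<Longrightarrow> lt a b \<Longrightarrow> \<not> lt c b \<Longrightarrow> lt a c \<Longrightarrow>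
    letter b * letter a * letter c - letter b * letter c * letter a \<in> plac_ideal P lt"
| rel2: "a \<in> P \<Longrightarrow> b \<in> P \<Longrightarrow> c \<in> P \<Longrightarrow> \<not> lt b a \<Longrightarrow> lt b c \<Longrightarrow> lt a c \<Longrightarrow>
    letter c * letter a * letter b - letter a * letter c * letter b \<in> plac_ideal P lt"
| rel3: "a \<in> P \<Longrightarrow> b \<in> P \<Longrightarrow> c \<in> P \<Longrightarrow> incomp lt a b \<Longrightarrow> incomp lt b c \<Longrightarrow> lt a c \<Longrightarrow>
    letter c * letter a * letter b - letter b * letter c * letter a \<in> plac_ideal P lt"
| zero: "0 \<in> plac_ideal P lt"
| add: "x \<in> plac_ideal P lt \<Longrightarrow> y \<in> plac_ideal P lt \<Longrightarrow> x + y \<in> plac_ideal P lt"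
| mult_left: "x \<in> plac_ideal P lt \<Longrightarrow> r * x \<in> plac_ideal P lt"
| mult_right: "x \<in> plac_ideal P lt \<Longrightarrow> x * r \<in> plac_ideal P lt"

lemma coeff_fun_plac_ideal:
  assumes "x \<in> plac_ideal P lt"
  shows "coeff_fun x \<in> I_plac P lt"
  using assms unfolding I_plac_def
proof induction
  case (rel1 a b c)
  then show ?case
    unfolding letter_mult_3 coeff_fun_diff coeff_fun_monomial
    by (intro nc_ideal.gen) (unfold plac_gens_def, blast)
next
  case (rel2 a b c)
  then show ?case
    unfolding letter_mult_3 coeff_fun_diff coeff_fun_monomial
    by (intro nc_ideal.gen) (unfold plac_gens_def, blast)
next
  case (rel3 a b c)
  then show ?case
    unfolding letter_mult_3 coeff_fun_diff coeff_fun_monomial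
    by (intro nc_ideal.gen) (unfold plac_gens_def, blast)
qed (simp_all add: coeff_fun_zero coeff_fun_add coeff_fun_mult nc_finite_coeff_fun
       nc_ideal.zero nc_ideal.add nc_ideal.lmult nc_ideal.rmult)

lemma plac_ideal_uminus: "x \<in> plac_ideal P lt \<Longrightarrow> - x \<in> plac_ideal P lt"
  using plac_ideal.mult_left[of x P lt "- 1"] by simp

lemma plac_ideal_diff: "x \<in> plac_ideal P lt \<Longrightarrow> y \<in> plac_ideal P lt \<Longrightarrow> x - y \<in> plac_ideal P lt"
  using plac_ideal.add[OF _ plac_ideal_uminus] by (metis diff_conv_add_uminus)

locale plac_ring =
  fixes P :: "'a set" and lt :: "'a \<Rightarrow> 'a \<Rightarrow> bool"
begin

definition cong :: "'a free_ring \<Rightarrow> 'a free_ring \<Rightarrow> bool" (infix "\<approx>" 50) where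
  "x \<approx> y \<longleftrightarrow> x - y \<in> plac_ideal P lt"

lemma cong_refl [simp]: "x \<approx> x"
  by (simp add: cong_def plac_ideal.zero)

lemma cong_sym: "x \<approx> y \<Longrightarrow> y \<approx> x"
  unfolding cong_def using plac_ideal_uminus by fastforce

lemma cong_trans [trans]: "x \<approx> y \<Longrightarrow> y \<approx> z \<Longrightarrow> x \<approx> z"
  unfolding cong_def using plac_ideal.add by fastforce

lemma cong_add: "x \<approx> y \<Longrightarrow> x' \<approx> y' \<Longrightarrow> x + x' \<approx> y + y'"
  unfolding cong_def using plac_ideal.add by (fastforce simp: algebra_simps)

lemma cong_diff: "x \<approx> y \<Longrightarrow> x' \<approx> y' \<Longrightarrow> x - x' \<approx> y - y'"
  unfolding cong_def using plac_ideal_diff by (fastforce simp: algebra_simps)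

lemma cong_mult_left: "x \<approx> y \<Longrightarrow> r * x \<approx> r * y"
  unfolding cong_def using plac_ideal.mult_left by (fastforce simp: algebra_simps)

lemma cong_mult_right: "x \<approx> y \<Longrightarrow> x * r \<approx> y * r"
  unfolding cong_def using plac_ideal.mult_right by (fastforce simp: algebra_simps)

lemma cong_sum: "(\<And>i. i \<in> A \<Longrightarrow> f i \<approx> g i) \<Longrightarrow> sum f A \<approx> sum g A"
  by (induction A rule: infinite_finite_induct) (simp_all add: cong_add)

lemma cong_add_cancel_left: "x \<approx> y \<Longrightarrow> x + x' \<approx> y + y' \<longleftrightarrow> x' \<approx> y'"
  by (metis add_diff_cancel_left' cong_add cong_diff)

lemma commute_three_parts_iff:
  fixes X Y Z :: "int \<Rightarrow> 'a free_ring"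
  assumes "\<And>p q. (X p + Y p) * (X q + Y q) \<approx> (X q + Y q) * (X p + Y p)"
    and "\<And>p q. (X p + Z p) * (X q + Z q) \<approx> (X q + Z q) * (X p + Z p)"
    and "\<And>p q. X p * X q \<approx> X q * X p"
  shows "(X p + Y p + Z p) * (X q + Y q + Z q) \<approx> (X q + Y q + Z q) * (X p + Y p + Z p) \<longleftrightarrow>
         Y p * Z q + Z p * Y q \<approx> Y q * Z p + Z q * Y p"
proof -
  define A where "A p q = (X p + Y p) * (X q + Y q) + (X p + Z p) * (X q + Z q) - X p * X q" for p q
  have "A p q \<approx> A q p"
    unfolding A_def using assms by (intro cong_add cong_diff)
  moreover have "(X p + Y p + Z p) * (X q + Y q + Z q) = A p q + (Y p * Z q + Z p * Y q)" for p q
    by (simp add: A_def algebra_simps)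
  ultimately show ?thesis
    by (simp add: cong_add_cancel_left)
qed

lemma pair_sum_cong:
  assumes "finite A"
    and "\<And>a. a \<in> A \<Longrightarrow> f a a \<approx> g a a"
    and "\<And>a b. a \<in> A \<Longrightarrow> b \<in> A \<Longrightarrow> a \<noteq> b \<Longrightarrow> f a b + f b a \<approx> g a b + g b a"
  shows "(\<Sum>a\<in>A. \<Sum>b\<in>A. f a b) \<approx> (\<Sum>a\<in>A. \<Sum>b\<in>A. g a b)"
  using assms
proof (induction A rule: finite_induct)
  case (insert c F)
  have split: "(\<Sum>a\<in>insert c F. \<Sum>b\<in>insert c F. h a b) =
      h c c + (\<Sum>b\<in>F. h c b + h b c) + (\<Sum>a\<in>F. \<Sum>b\<in>F. h a b)" for h :: "_ \<Rightarrow> _ \<Rightarrow> 'a free_ring"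
    using insert(1,2) by (simp add: sum.distrib algebra_simps)
  have "(\<Sum>a\<in>F. \<Sum>b\<in>F. f a b) \<approx> (\<Sum>a\<in>F. \<Sum>b\<in>F. g a b)"
    using insert by auto
  moreover have "(\<Sum>b\<in>F. f c b + f b c) \<approx> (\<Sum>b\<in>F. g c b + g b c)"
    using insert by (intro cong_sum) auto
  ultimately show ?case
    unfolding split using insert by (intro cong_add) auto
qed simp

lemma cross_form_symmetric:
  fixes c \<alpha> \<beta> :: "int \<Rightarrow> 'a free_ring"
  assumes "\<And>i j. (c i + \<alpha> i) * (c j + \<alpha> j) \<approx> (c j + \<alpha> j) * (c i + \<alpha> i)"
    and "\<And>i j. (c i + \<beta> i) * (c j + \<beta> j) \<approx> (c j + \<beta> j) * (c i + \<beta> i)"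
    and "\<And>i j. \<alpha> i * \<alpha> j \<approx> \<alpha> j * \<alpha> i" "\<And>i j. \<beta> i * \<beta> j \<approx> \<beta> j * \<beta> i"
    and "\<And>i j. \<alpha> i * \<beta> j \<approx> \<alpha> j * \<beta> i" "\<And>i j. \<beta> i * \<alpha> j \<approx> \<beta> j * \<alpha> i"
  shows "(U * c i + V * \<alpha> i) * (c j + \<beta> j) + (V * c i + U * \<beta> i) * (c j + \<alpha> j) \<approx>
         (U * c j + V * \<alpha> j) * (c i + \<beta> i) + (V * c j + U * \<beta> j) * (c i + \<alpha> i)"
proof -
  define \<Psi> where "\<Psi> i j = U * ((c i + \<beta> i) * (c j + \<beta> j) - \<beta> i * \<beta> j + \<beta> i * \<alpha> j)
    + V * ((c i + \<alpha> i) * (c j + \<alpha> j) - \<alpha> i * \<alpha> j + \<alpha> i * \<beta> j)" for i j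
  have "(U * c i + V * \<alpha> i) * (c j + \<beta> j) + (V * c i + U * \<beta> i) * (c j + \<alpha> j) = \<Psi> i j" for i j
    by (simp add: \<Psi>_def algebra_simps)
  moreover have "\<Psi> i j \<approx> \<Psi> j i"
    unfolding \<Psi>_def using assms by (intro cong_add cong_diff cong_mult_left)
  ultimately show ?thesis
    by simp
qed

lemma commute_adjoin_top_letter:
  fixes e :: "int \<Rightarrow> 'a free_ring"
  assumes push: "\<And>k. e k * U \<approx> U * e k + M * e (k - 1)"
    and absorb: "\<And>k. U * e k * U \<approx> U * U * e k"
    and commute: "\<And>p q. e p * e q \<approx> e q * e p"
  shows "(e p + U * e (p - 1)) * (e q + U * e (q - 1)) \<approx>
         (e q + U * e (q - 1)) * (e p + U * e (p - 1))"
proof -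
  define \<Phi> where "\<Phi> p q = e p * e q + U * (e p * e (q - 1)) + M * (e (p - 1) * e (q - 1))
     + U * (e (p - 1) * e q) + U * U * (e (p - 1) * e (q - 1))" for p q
  have expand: "(e p + U * e (p - 1)) * (e q + U * e (q - 1)) \<approx> \<Phi> p q" for p q
  proof -
    have "(e p + U * e (p - 1)) * (e q + U * e (q - 1)) =
        e p * e q + (e p * U) * e (q - 1) + U * (e (p - 1) * e q) + (U * e (p - 1) * U) * e (q - 1)"
      by (simp add: algebra_simps)
    moreover have "\<dots> \<approx> e p * e q + (U * e p + M * e (p - 1)) * e (q - 1) + U * (e (p - 1) * e q)
        + (U * U * e (p - 1)) * e (q - 1)"
      by (intro cong_add cong_mult_right push absorb cong_refl)
    moreover have "\<dots> = \<Phi> p q"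
      by (simp add: \<Phi>_def algebra_simps)
    ultimately show ?thesis
      by simp
  qed
  have "\<Phi> p q \<approx> e q * e p + U * (e (q - 1) * e p) + M * (e (q - 1) * e (p - 1))
      + U * (e q * e (p - 1)) + U * U * (e (q - 1) * e (p - 1))"
    unfolding \<Phi>_def by (intro cong_add cong_mult_left commute)
  also have "\<dots> = \<Phi> q p"
    by (simp add: \<Phi>_def algebra_simps)
  finally show ?thesis
    using expand[of p q] expand[of q p] by (meson cong_sym cong_trans)
qed

lemma factors_commute:
  assumes "\<And>k. \<alpha> * z k * \<beta> \<approx> \<alpha> * \<beta> * z k" and "\<And>i j. z i * z j \<approx> z j * z i"
  shows "\<alpha> * z i * (\<beta> * z j) \<approx> \<alpha> * z j * (\<beta> * z i)"
proof -
  have "\<alpha> * z i * (\<beta> * z j) = (\<alpha> * z i * \<beta>) * z j"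
    by (simp add: mult.assoc)
  also have "\<dots> \<approx> \<alpha> * \<beta> * (z i * z j)"
    using cong_mult_right[OF assms(1)] by (simp add: mult.assoc)
  also have "\<dots> \<approx> \<alpha> * \<beta> * (z j * z i)"
    by (intro cong_mult_left assms(2))
  also have "\<dots> \<approx> (\<alpha> * z j * \<beta>) * z i"
    using cong_mult_right[OF cong_sym[OF assms(1)]] by (simp add: mult.assoc)
  also have "\<dots> = \<alpha> * z j * (\<beta> * z i)"
    by (simp add: mult.assoc)
  finally show ?thesis .
qed

lemma rel1_cong:
  "a \<in> P \<Longrightarrow> b \<in> P \<Longrightarrow> c \<in> P \<Longrightarrow> lt a b \<Longrightarrow> \<not> lt c b \<Longrightarrow> lt a c \<Longrightarrow>
   p * letter b * letter a * letter c * q \<approx> p * letter b * letter c * letter a * q"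
proof -
  assume "a \<in> P" "b \<in> P" "c \<in> P" "lt a b" "\<not> lt c b" "lt a c"
  have "p * (letter b * letter a * letter c - letter b * letter c * letter a) * q \<in> plac_ideal P lt"
    by (intro plac_ideal.mult_left plac_ideal.mult_right plac_ideal.rel1) fact+
  then show ?thesis
    by (simp add: cong_def algebra_simps)
qed

lemma rel2_cong:
  "a \<in> P \<Longrightarrow> b \<in> P \<Longrightarrow> c \<in> P \<Longrightarrow> \<not> lt b a \<Longrightarrow> lt b c \<Longrightarrow> lt a c \<Longrightarrow>
   p * letter c * letter a * letter b * q \<approx> p * letter a * letter c * letter b * q"
proof -
  assume "a \<in> P" "b \<in> P" "c \<in> P" "\<not> lt b a" "lt b c" "lt a c"
  have "p * (letter c * letter a * letter b - letter a * letter c * letter b) * q \<in> plac_ideal P lt"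
    by (intro plac_ideal.mult_left plac_ideal.mult_right plac_ideal.rel2) fact+
  then show ?thesis
    by (simp add: cong_def algebra_simps)
qed

lemma rel3_cong:
  "a \<in> P \<Longrightarrow> b \<in> P \<Longrightarrow> c \<in> P \<Longrightarrow> incomp lt a b \<Longrightarrow> incomp lt b c \<Longrightarrow> lt a c \<Longrightarrow>
   p * letter c * letter a * letter b * q \<approx> p * letter b * letter c * letter a * q"
proof -
  assume "a \<in> P" "b \<in> P" "c \<in> P" "incomp lt a b" "incomp lt b c" "lt a c"
  have "p * (letter c * letter a * letter b - letter b * letter c * letter a) * q \<in> plac_ideal P lt"
    by (intro plac_ideal.mult_left plac_ideal.mult_right plac_ideal.rel3) fact+
  then show ?thesis
    by (simp add: cong_def algebra_simps)
qed

section \<open>Chains and their elementary symmetric functions\<close>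

definition below :: "'a set \<Rightarrow> 'a \<Rightarrow> 'a set" where
  "below T d = {x \<in> T. lt x d}"

definition dec_chains :: "'a set \<Rightarrow> nat \<Rightarrow> 'a list set" where
  "dec_chains T n = {w. length w = n \<and> set w \<subseteq> T \<and> sorted_wrt (\<lambda>x y. lt y x) w}"

definition esym :: "'a set \<Rightarrow> int \<Rightarrow> 'a free_ring" where
  "esym T k = (if k < 0 then 0 else \<Sum>w\<in>dec_chains T (nat k). monomial w)"

definition esym_lead :: "'a set \<Rightarrow> 'a set \<Rightarrow> int \<Rightarrow> 'a free_ring" where
  "esym_lead T A k = (\<Sum>a\<in>A. letter a * esym (below T a) (k - 1))"

definition esym_commute :: "'a set \<Rightarrow> bool" where
  "esym_commute T \<longleftrightarrow> (\<forall>p q. esym T p * esym T q \<approx> esym T q * esym T p)"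

lemma finite_dec_chains: "finite T \<Longrightarrow> finite (dec_chains T n)"
  unfolding dec_chains_def
  by (rule finite_subset[OF _ finite_lists_length_eq[of T n]]) auto

lemma esym_neg: "k < 0 \<Longrightarrow> esym T k = 0"
  by (simp add: esym_def)

lemma esym_0 [simp]: "esym T 0 = 1"
proof -
  have "dec_chains T 0 = {[]}"
    by (auto simp: dec_chains_def)
  then show ?thesis
    by (simp add: esym_def)
qed

lemma esym_empty: "esym {} k = (if k = 0 then 1 else 0)"
proof -
  have "dec_chains {} n = (if n = 0 then {[]} else {})" for n
    by (auto simp: dec_chains_def)
  then show ?thesis
    by (auto simp: esym_def)
qed

lemma esym_lead_singleton: "esym_lead T {a} k = letter a * esym (below T a) (k - 1)"
  by (simp add: esym_lead_def)

lemma dec_chains_Suc: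
  "dec_chains T (Suc n) = (\<Union>d\<in>T. Cons d ` dec_chains (below T d) n)"
proof (intro set_eqI iffI)
  fix w assume "w \<in> dec_chains T (Suc n)"
  then show "w \<in> (\<Union>d\<in>T. Cons d ` dec_chains (below T d) n)"
    by (cases w) (auto simp: dec_chains_def below_def)
qed (auto simp: dec_chains_def below_def)

lemma esym_eq_lead:
  assumes "finite T" "k \<ge> 1"
  shows "esym T k = esym_lead T T k"
proof -
  define n where "n = nat (k - 1)"
  have n: "nat k = Suc n" "nat (k - 1) = n"
    using assms(2) by (simp_all add: n_def)
  have "esym T k = (\<Sum>w\<in>dec_chains T (Suc n). monomial w)"
    using assms(2) n by (simp add: esym_def)
  also have "\<dots> = (\<Sum>d\<in>T. \<Sum>w\<in>Cons d ` dec_chains (below T d) n. monomial w)"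
    unfolding dec_chains_Suc
    by (rule sum.UNION_disjoint)
      (use assms(1) in \<open>auto intro!: finite_imageI finite_dec_chains simp: below_def\<close>)
  also have "\<dots> = (\<Sum>d\<in>T. letter d * esym (below T d) (k - 1))"
    using assms(2) n
    by (auto simp: sum.reindex esym_def monomial_Cons sum_distrib_left intro!: sum.cong)
  finally show ?thesis
    by (simp add: esym_lead_def)
qed

lemma esym_downset_split:
  assumes "finite T" "D \<subseteq> T" and down: "\<And>x y. x \<in> D \<Longrightarrow> y \<in> T \<Longrightarrow> lt y x \<Longrightarrow> y \<in> D"
  shows "esym T k = esym D k + esym_lead T (T - D) k"
proof (cases "k \<ge> 1")
  case True
  have "below D x = below T x" if "x \<in> D" for x
    using that assms(2) down by (auto simp: below_def)
  then have "esym_lead T D k = esym_lead D D k"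
    by (simp add: esym_lead_def)
  also have "\<dots> = esym D k"
    using True assms(1,2) by (simp add: esym_eq_lead finite_subset)
  finally have "esym_lead T D k = esym D k" .
  moreover have "esym_lead T T k = esym_lead T D k + esym_lead T (T - D) k"
    using assms(1,2) by (simp add: esym_lead_def sum.subset_diff)
  ultimately show ?thesis
    using True assms(1) by (simp add: esym_eq_lead)
next
  case False
  then consider "k < 0" | "k = 0"
    by linarith
  then show ?thesis
    by cases (simp_all add: esym_neg esym_lead_def)
qed

lemma coeff_fun_esym:
  assumes "finite T"
  shows "coeff_fun (esym T k) = elem_sym lt k T"
proof
  fix w
  show "coeff_fun (esym T k) w = elem_sym lt k T w"
  proof (cases "k < 0")
    case True
    then show ?thesis
      by (simp add: esym_neg coeff_fun_def elem_sym_def)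
  next
    case False
    have "Poly_Mapping.lookup (monomial v) (Word w) = (if v = w then 1 else 0)" for v
      by (simp add: monomial_def lookup_single when_def)
    then have "coeff_fun (esym T k) w = (\<Sum>v\<in>dec_chains T (nat k). if v = w then 1 else 0)"
      using False by (simp add: coeff_fun_def esym_def lookup_sum)
    also have "\<dots> = (if w \<in> dec_chains T (nat k) then 1 else 0)"
      using finite_dec_chains[OF assms] by (rule sum.delta)
    also have "\<dots> = elem_sym lt k T w"
      using False by (auto simp: dec_chains_def elem_sym_def)
    finally show ?thesis .
  qed
qed

text \<open>One application of relation (1) for each letter of the chain.\<close>

lemma letter_pair_passes_chain:
  assumes "sorted_wrt (\<lambda>x y. lt y x) w" "set w \<subseteq> P" "d \<in> P" "c \<in> P"
    "\<forall>x\<in>set w. lt x d \<and> lt x c \<and> \<not> lt c x" "\<not> lt c d"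
  shows "letter d * monomial w * letter c \<approx> letter d * letter c * monomial w"
  using assms
proof (induction w arbitrary: d)
  case Nil
  then show ?case
    by simp
next
  case (Cons x w)
  have "letter d * monomial (x # w) * letter c = letter d * (letter x * monomial w * letter c)"
    by (simp add: monomial_Cons mult.assoc)
  also have "\<dots> \<approx> letter d * (letter x * letter c * monomial w)"
    using Cons.prems by (intro cong_mult_left Cons.IH) auto
  also have "\<dots> = 1 * letter d * letter x * letter c * monomial w"
    by (simp add: mult.assoc)
  also have "\<dots> \<approx> 1 * letter d * letter c * letter x * monomial w"
    using Cons.prems by (intro rel1_cong) auto
  also have "\<dots> = letter d * letter c * monomial (x # w)"
    by (simp add: monomial_Cons mult.assoc)
  finally show ?case .
qed

lemma letter_pair_passes_esym:
  assumes "R \<subseteq> P" "d \<in> P" "c \<in> P" "\<forall>x\<in>R. lt x d \<and> lt x c \<and> \<not> lt c x" "\<not> lt c d"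
  shows "letter d * esym R k * letter c \<approx> letter d * letter c * esym R k"
proof (cases "k < 0")
  case True
  then show ?thesis
    by (simp add: esym_neg)
next
  case False
  have "letter d * esym R k * letter c =
      (\<Sum>w\<in>dec_chains R (nat k). letter d * monomial w * letter c)"
    using False by (simp add: esym_def sum_distrib_left sum_distrib_right)
  also have "\<dots> \<approx> (\<Sum>w\<in>dec_chains R (nat k). letter d * letter c * monomial w)"
    using assms by (intro cong_sum letter_pair_passes_chain) (auto simp: dec_chains_def)
  also have "\<dots> = letter d * letter c * esym R k"
    using False by (simp add: esym_def sum_distrib_left)
  finally show ?thesis .
qed

lemma letter_sums_pass_esym:
  assumes "R \<subseteq> P" "A \<subseteq> P" "B \<subseteq> P"
    "\<And>a b x. a \<in> A \<Longrightarrow> b \<in> B \<Longrightarrow> x \<in> R \<Longrightarrow> lt x a \<and> lt x b \<and> \<not> lt b x"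
    "\<And>a b. a \<in> A \<Longrightarrow> b \<in> B \<Longrightarrow> \<not> lt b a"
  shows "(\<Sum>a\<in>A. letter a) * esym R k * (\<Sum>b\<in>B. letter b) \<approx>
         (\<Sum>a\<in>A. letter a) * (\<Sum>b\<in>B. letter b) * esym R k"
proof -
  have "(\<Sum>a\<in>A. letter a) * esym R k * (\<Sum>b\<in>B. letter b) =
        (\<Sum>a\<in>A. \<Sum>b\<in>B. letter a * esym R k * letter b)"
    unfolding sum_distrib_right by (simp only: sum_distrib_left)
  also have "\<dots> \<approx> (\<Sum>a\<in>A. \<Sum>b\<in>B. letter a * letter b * esym R k)"
    using assms by (intro cong_sum letter_pair_passes_esym) auto
  also have "\<dots> = (\<Sum>a\<in>A. letter a) * (\<Sum>b\<in>B. letter b) * esym R k"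
    by (simp only: mult.assoc sum_distrib_left[symmetric] sum_distrib_right[symmetric])
  finally show ?thesis .
qed

lemma commutator_annihilates:
  assumes "d \<in> P" "u \<in> P" "x \<in> P" "\<not> lt x d" "lt x u" "lt d u"
  shows "(letter d * letter u - letter u * letter d) * letter x * y \<approx> 0"
proof -
  have "1 * letter u * letter d * letter x * y \<approx> 1 * letter d * letter u * letter x * y"
    using assms by (intro rel2_cong)
  then have "letter d * letter u * letter x * y \<approx> letter u * letter d * letter x * y"
    by (simp add: cong_sym)
  then show ?thesis
    by (simp add: cong_def algebra_simps)
qed

lemma esym_two_maxima_split:
  assumes "finite T" "u \<in> T" "v \<in> T" "u \<noteq> v" "\<forall>x\<in>T. \<not> lt u x" "\<forall>x\<in>T. \<not> lt v x"
  shows "esym T k = esym (T - {u, v}) k + esym_lead T {u} k + esym_lead T {v} k"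
    and "esym (T - {v}) k = esym (T - {u, v}) k + esym_lead T {u} k"
proof -
  have "esym T k = esym (T - {u, v}) k + esym_lead T (T - (T - {u, v})) k"
    by (rule esym_downset_split) (use assms in auto)
  moreover have "T - (T - {u, v}) = {u, v}"
    using assms by auto
  ultimately show "esym T k = esym (T - {u, v}) k + esym_lead T {u} k + esym_lead T {v} k"
    using assms(4) by (simp add: esym_lead_def add.assoc)
next
  have "esym (T - {v}) k = esym (T - {u, v}) k + esym_lead (T - {v}) (T - {v} - (T - {u, v})) k"
    by (rule esym_downset_split) (use assms in auto)
  moreover have "T - {v} - (T - {u, v}) = {u}"
    using assms by auto
  moreover have "below (T - {v}) u = below T u"
    using assms by (auto simp: below_def)
  ultimately show "esym (T - {v}) k = esym (T - {u, v}) k + esym_lead T {u} k"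
    by (simp add: esym_lead_singleton)
qed

lemma esym_commute_two_maxima_iff:
  assumes "finite T" "u \<in> T" "v \<in> T" "u \<noteq> v" "\<forall>x\<in>T. \<not> lt u x" "\<forall>x\<in>T. \<not> lt v x"
    and "esym_commute (T - {u})" "esym_commute (T - {v})" "esym_commute (T - {u, v})"
  shows "esym_commute T \<longleftrightarrow>
    (\<forall>p q. esym_lead T {u} p * esym_lead T {v} q + esym_lead T {v} p * esym_lead T {u} q \<approx>
           esym_lead T {u} q * esym_lead T {v} p + esym_lead T {v} q * esym_lead T {u} p)"
proof -
  have without_v: "esym (T - {v}) k = esym (T - {u, v}) k + esym_lead T {u} k" for k
    by (rule esym_two_maxima_split(2)) fact+
  have without_u: "esym (T - {u}) k = esym (T - {u, v}) k + esym_lead T {v} k" for k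
    using esym_two_maxima_split(2)[of T v u k] assms(1-6) by (auto simp: insert_commute)
  have "(esym (T - {u, v}) p + esym_lead T {u} p + esym_lead T {v} p) *
          (esym (T - {u, v}) q + esym_lead T {u} q + esym_lead T {v} q) \<approx>
        (esym (T - {u, v}) q + esym_lead T {u} q + esym_lead T {v} q) *
          (esym (T - {u, v}) p + esym_lead T {u} p + esym_lead T {v} p) \<longleftrightarrow>
        esym_lead T {u} p * esym_lead T {v} q + esym_lead T {v} p * esym_lead T {u} q \<approx>
          esym_lead T {u} q * esym_lead T {v} p + esym_lead T {v} q * esym_lead T {u} p" for p q
    by (rule commute_three_parts_iff)
      (use assms(7-9) in \<open>simp_all add: esym_commute_def without_u without_v\<close>)
  then show ?thesis
    unfolding esym_commute_def esym_two_maxima_split(1)[OF assms(1-6)] by blast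
qed

end

section \<open>Posets with a greatest element\<close>

locale plac_poset = plac_ring +
  assumes strict_poset: "strict_poset P lt"
begin

lemma lt_irrefl: "a \<in> P \<Longrightarrow> \<not> lt a a"
  using strict_poset by (simp add: strict_poset_def)

lemma lt_trans: "a \<in> P \<Longrightarrow> b \<in> P \<Longrightarrow> c \<in> P \<Longrightarrow> lt a b \<Longrightarrow> lt b c \<Longrightarrow> lt a c"
  using strict_poset unfolding strict_poset_def by blast

lemma lt_asym: "a \<in> P \<Longrightarrow> b \<in> P \<Longrightarrow> lt a b \<Longrightarrow> \<not> lt b a"
  using lt_irrefl lt_trans by blast

lemma exists_maximal_above:
  assumes "finite S" "S \<subseteq> P" "y \<in> S"
  shows "\<exists>u\<in>S. (u = y \<or> lt y u) \<and> (\<forall>x\<in>S. \<not> lt u x)"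
  using assms(3)
proof (induction "card {z\<in>S. lt y z}" arbitrary: y rule: less_induct)
  case less
  show ?case
  proof (cases "\<forall>x\<in>S. \<not> lt y x")
    case True
    then show ?thesis
      using less.prems by blast
  next
    case False
    then obtain x where x: "x \<in> S" "lt y x"
      by blast
    have "{z\<in>S. lt x z} \<subset> {z\<in>S. lt y z}"
      using x less.prems assms(2) lt_trans lt_irrefl by blast
    then have "card {z\<in>S. lt x z} < card {z\<in>S. lt y z}"
      by (rule psubset_card_mono[rotated]) (use assms(1) in simp)
    then obtain u where u: "u \<in> S" "u = x \<or> lt x u" "\<forall>z\<in>S. \<not> lt u z"
      using less.hyps[OF _ x(1)] by blast
    then have "lt y u"
      using x less.prems assms(2) lt_trans by blast
    then show ?thesis
      using u by blast
  qed
qed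

lemma below_below:
  assumes "T \<subseteq> P" "d \<in> P" "a \<in> below T d"
  shows "below (below T d) a = below T a"
  using assms lt_trans[of _ a d] by (auto simp: below_def)

lemma below_subset_below: "T \<subseteq> P \<Longrightarrow> d \<in> P \<Longrightarrow> a \<in> below T d \<Longrightarrow> below T a \<subseteq> below T d"
  using lt_trans[of _ a d] by (auto simp: below_def)

lemma below_not_above: "T \<subseteq> P \<Longrightarrow> d \<in> P \<Longrightarrow> x \<in> below T d \<Longrightarrow> \<not> lt d x"
  using lt_asym[of x d] by (auto simp: below_def)

lemma esym_below_split:
  assumes "finite T" "T \<subseteq> P" "d \<in> P"
  shows "esym T k = esym (below T d) k + esym_lead T (T - below T d) k"
proof (rule esym_downset_split)
  fix x y
  assume "x \<in> below T d" "y \<in> T" "lt y x"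
  then show "y \<in> below T d"
    using assms lt_trans[of y x d] by (auto simp: below_def)
qed (use assms in \<open>auto simp: below_def\<close>)

context
  fixes S u
  assumes finite: "finite S" and subset: "S \<subseteq> P" and u: "u \<in> S"
    and greatest: "\<forall>x\<in>S - {u}. lt x u"
begin

lemma maximum_in_P: "u \<in> P"
  using subset u by blast

lemma maximum_is_maximal: "x \<in> S \<Longrightarrow> \<not> lt u x"
  using subset maximum_in_P greatest lt_asym[of x u] lt_irrefl[of u] by (cases "x = u") auto

lemma esym_maximum_split: "esym S k = esym (S - {u}) k + letter u * esym (S - {u}) (k - 1)"
proof -
  have "esym S k = esym (S - {u}) k + esym_lead S (S - (S - {u})) k"
    by (rule esym_downset_split) (use finite subset u maximum_is_maximal in auto)
  moreover have "S - (S - {u}) = {u}" "below S u = S - {u}"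
    using u subset greatest maximum_in_P lt_irrefl by (auto simp: below_def)
  ultimately show ?thesis
    by (simp add: esym_lead_singleton)
qed

lemma maximum_passes_esym:
  "letter u * esym (S - {u}) k * letter u \<approx> letter u * letter u * esym (S - {u}) k"
  using u subset maximum_in_P maximum_is_maximal greatest by (intro letter_pair_passes_esym) auto

text \<open>Relation (2) kills the commutator of \<open>u\<^sub>d\<close> and \<open>u\<^sub>u\<close> in front of every chain whose
  first letter is not below \<open>d\<close>.\<close>

lemma commutator_esym_below:
  assumes d: "d \<in> S - {u}"
  shows "(letter d * letter u - letter u * letter d) * esym (S - {u}) k \<approx>
         (letter d * letter u - letter u * letter d) * esym (below (S - {u}) d) k"
proof -
  let ?C = "letter d * letter u - letter u * letter d"
  have "?C * esym_lead (S - {u}) (S - {u} - below (S - {u}) d) k \<approx>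
        (\<Sum>x\<in>S - {u} - below (S - {u}) d. 0)"
    unfolding esym_lead_def sum_distrib_left mult.assoc[symmetric]
    using d subset maximum_in_P greatest
    by (intro cong_sum commutator_annihilates) (auto simp: below_def)
  moreover have "esym (S - {u}) k =
      esym (below (S - {u}) d) k + esym_lead (S - {u}) (S - {u} - below (S - {u}) d) k"
    using d finite subset by (intro esym_below_split) auto
  ultimately show ?thesis
    by (simp add: distrib_left cong_def)
qed

lemma esym_times_maximum:
  "esym (S - {u}) k * letter u \<approx> letter u * esym (S - {u}) k +
     (\<Sum>d\<in>S - {u}. letter d * letter u - letter u * letter d) * esym (S - {u}) (k - 1)"
proof (cases "k \<ge> 1")
  case True
  let ?S' = "S - {u}"
  define E where "E d = esym (below ?S' d) (k - 1)" for d
  have "esym ?S' k * letter u = (\<Sum>d\<in>?S'. letter d * E d * letter u)"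
    using finite True by (simp add: esym_eq_lead esym_lead_def E_def sum_distrib_right)
  also have "\<dots> \<approx> (\<Sum>d\<in>?S'. letter d * letter u * E d)"
    unfolding E_def using subset maximum_in_P maximum_is_maximal greatest
    by (intro cong_sum letter_pair_passes_esym) (auto simp: below_def)
  also have "\<dots> = letter u * esym ?S' k +
      (\<Sum>d\<in>?S'. (letter d * letter u - letter u * letter d) * E d)"
    using finite True
    by (simp add: esym_eq_lead esym_lead_def E_def sum_distrib_left algebra_simps sum_subtractf)
  also have "\<dots> \<approx> letter u * esym ?S' k +
      (\<Sum>d\<in>?S'. (letter d * letter u - letter u * letter d) * esym ?S' (k - 1))"
    unfolding E_def by (intro cong_add cong_sum cong_refl cong_sym[OF commutator_esym_below])
  finally show ?thesis
    by (simp add: sum_distrib_right)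
next
  case False
  then consider "k < 0" | "k = 0"
    by linarith
  then show ?thesis
    by cases (simp_all add: esym_neg)
qed

lemma esym_commute_maximum:
  assumes "esym_commute (S - {u})"
  shows "esym_commute S"
  unfolding esym_commute_def esym_maximum_split
proof (intro allI)
  fix p q
  show "(esym (S - {u}) p + letter u * esym (S - {u}) (p - 1)) *
        (esym (S - {u}) q + letter u * esym (S - {u}) (q - 1)) \<approx>
      (esym (S - {u}) q + letter u * esym (S - {u}) (q - 1)) *
        (esym (S - {u}) p + letter u * esym (S - {u}) (p - 1))"
    by (rule commute_adjoin_top_letter[where e = "esym (S - {u})" and U = "letter u"
          and M = "\<Sum>d\<in>S - {u}. letter d * letter u - letter u * letter d"])
      (use esym_times_maximum maximum_passes_esym assms in \<open>simp_all add: esym_commute_def\<close>)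
qed

end

end

section \<open>Two maximal elements in a (3+1)-free poset\<close>

locale plac_31free = plac_poset +
  assumes three_one_free: "three_one_free P lt"
begin

lemma no_three_one:
  "a \<in> P \<Longrightarrow> b \<in> P \<Longrightarrow> c \<in> P \<Longrightarrow> d \<in> P \<Longrightarrow> lt a b \<Longrightarrow> lt b c \<Longrightarrow>
   d \<noteq> a \<Longrightarrow> d \<noteq> b \<Longrightarrow> d \<noteq> c \<Longrightarrow> incomp lt d a \<Longrightarrow> incomp lt d b \<Longrightarrow> incomp lt d c \<Longrightarrow> False"
  using three_one_free unfolding three_one_free_def by blast

end

locale two_maximal = plac_31free +
  fixes S u v
  assumes finite: "finite S" and subset: "S \<subseteq> P" and u: "u \<in> S" and v: "v \<in> S"
    and distinct: "u \<noteq> v" and u_maximal: "\<forall>x\<in>S. \<not> lt u x" and v_maximal: "\<forall>x\<in>S. \<not> lt v x"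
begin

lemma u_in_P: "u \<in> P"
  using subset u by blast

lemma v_in_P: "v \<in> P"
  using subset v by blast

lemma maximal_incomp: "incomp lt v u"
  using u v u_maximal v_maximal by (simp add: incomp_def)

lemma below_maximal_psubset: "below S u \<subset> S"
  using u u_maximal by (auto simp: below_def)

text \<open>The first use of (3+1)-freeness: the chain \<open>a < x < u\<close> together with \<open>v\<close>.\<close>

lemma only_below_not_below:
  assumes a: "a \<in> below S u - below S v" and x: "x \<in> below S u"
  shows "\<not> lt a x"
proof
  assume ax: "lt a x"
  have P: "a \<in> P" "x \<in> P" "v \<in> P"
    using a x v subset by (auto simp: below_def)
  show False
  proof (cases "lt x v")
    case True
    then show False
      using a lt_trans[of a x v] ax P by (auto simp: below_def)
  next
    case False
    show False
    proof (rule no_three_one[OF P(1,2) u_in_P P(3) ax])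
      show "lt x u" "v \<noteq> u"
        using x distinct by (auto simp: below_def)
      show "v \<noteq> a" "v \<noteq> x"
        using a x v_maximal u by (auto simp: below_def)
      show "incomp lt v a" "incomp lt v x" "incomp lt v u"
        using a x False v_maximal maximal_incomp by (auto simp: incomp_def below_def)
    qed
  qed
qed

text \<open>The second use of (3+1)-freeness: the chain \<open>x < b < v\<close> together with \<open>a\<close>.\<close>

lemma below_only_subset:
  assumes a: "a \<in> below S u - below S v" and b: "b \<in> below S v - below S u"
  shows "below S b \<subseteq> below S a"
proof
  fix x
  assume x: "x \<in> below S b"
  have P: "a \<in> P" "b \<in> P" "x \<in> P"
    using a b x subset by (auto simp: below_def)
  have "lt x a"
  proof (rule ccontr)
    assume xa: "\<not> lt x a"
    show False
    proof (rule no_three_one[OF P(3,2) v_in_P P(1)])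
      show "lt x b" "lt b v"
        using x b by (auto simp: below_def)
      show "a \<noteq> x" "a \<noteq> b" "a \<noteq> v"
        using a b x xa v_maximal u P lt_trans[of x b v] v_in_P by (auto simp: below_def)
      show "incomp lt a x"
        using a b x xa P lt_trans[of a x b] lt_trans[of a b v] v_in_P
        by (auto simp: incomp_def below_def)
      show "incomp lt a b"
        using a b P lt_trans[of b a u] lt_trans[of a b v] u_in_P v_in_P
        by (auto simp: incomp_def below_def)
      show "incomp lt a v"
        using a v_maximal by (auto simp: incomp_def below_def)
    qed
  qed
  then show "x \<in> below S a"
    using x by (simp add: below_def)
qed

lemma esym_lead_only_eq:
  "esym_lead (below S u) (below S u - below S v) k =
   (\<Sum>a\<in>below S u - below S v. letter a * esym (below S a) (k - 1))"
  unfolding esym_lead_def using subset u_in_P by (intro sum.cong) (auto simp: below_below)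

lemma esym_below_maximal_split:
  "esym (below S u) k =
   esym (below S u \<inter> below S v) k + esym_lead (below S u) (below S u - below S v) k"
proof -
  have "esym (below S u) k =
      esym (below S u \<inter> below S v) k + esym_lead (below S u) (below S u - below S u \<inter> below S v) k"
  proof (rule esym_downset_split)
    fix x y
    assume "x \<in> below S u \<inter> below S v" "y \<in> below S u" "lt y x"
    then show "y \<in> below S u \<inter> below S v"
      using subset v_in_P lt_trans[of y x v] by (auto simp: below_def)
  qed (use finite in \<open>auto simp: below_def\<close>)
  moreover have "below S u - below S u \<inter> below S v = below S u - below S v"
    by blast
  ultimately show ?thesis
    by simp
qed


lemma maximal_pair_passes_esym_below:
  "letter u * esym (below S u) k * letter v \<approx>
   letter u * letter v * esym (below S u \<inter> below S v) k +
   letter v * letter u * esym_lead (below S u) (below S u - below S v) k"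
proof -
  let ?A = "below S u - below S v"
  have common: "letter u * esym (below S u \<inter> below S v) k * letter v \<approx>
      letter u * letter v * esym (below S u \<inter> below S v) k"
    using subset u_in_P v_in_P u v_maximal below_not_above[OF subset v_in_P]
    by (intro letter_pair_passes_esym) (auto simp: below_def)
  have lead: "letter u * (letter a * esym (below S a) (k - 1)) * letter v \<approx>
      letter v * letter u * (letter a * esym (below S a) (k - 1))" if a: "a \<in> ?A" for a
  proof -
    have aP: "a \<in> P"
      using a subset by (auto simp: below_def)
    have "x \<in> below S v" if x: "x \<in> below S a" for x
      using only_below_not_below[of x a] a x subset u_in_P lt_trans[of x a u]
      by (auto simp: below_def)
    then have "letter a * esym (below S a) (k - 1) * letter v \<approx>
        letter a * letter v * esym (below S a) (k - 1)"
      using a aP subset v_in_P v_maximal below_not_above[OF subset v_in_P]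
      by (intro letter_pair_passes_esym) (auto simp: below_def)
    then have "letter u * (letter a * esym (below S a) (k - 1) * letter v) \<approx>
        1 * letter u * letter a * letter v * esym (below S a) (k - 1)"
      by (simp add: cong_mult_left mult.assoc)
    also have "\<dots> \<approx> 1 * letter v * letter u * letter a * esym (below S a) (k - 1)"
      using a aP u_in_P v_in_P v_maximal maximal_incomp
      by (intro rel3_cong) (auto simp: below_def incomp_def)
    finally show ?thesis
      by (simp add: mult.assoc)
  qed
  have "letter u * esym (below S u) k * letter v =
      letter u * esym (below S u \<inter> below S v) k * letter v +
      (\<Sum>a\<in>?A. letter u * (letter a * esym (below S a) (k - 1)) * letter v)"
    unfolding esym_below_maximal_split esym_lead_only_eq
    by (simp only: distrib_left distrib_right sum_distrib_left sum_distrib_right)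
  moreover have "letter u * esym (below S u \<inter> below S v) k * letter v +
      (\<Sum>a\<in>?A. letter u * (letter a * esym (below S a) (k - 1)) * letter v) \<approx>
      letter u * letter v * esym (below S u \<inter> below S v) k +
      letter v * letter u * esym_lead (below S u) ?A k"
    unfolding esym_lead_only_eq sum_distrib_left
  proof (rule cong_add[OF common cong_sum])
    fix a
    assume "a \<in> ?A"
    then show "letter u * (letter a * esym (below S a) (k - 1)) * letter v \<approx>
        letter v * letter u * (letter a * esym (below S a) (k - 1))"
      by (rule lead)
  qed
  ultimately show ?thesis
    by (simp only:)
qed

lemma esym_lead_only_diag:
  assumes IH: "\<And>T. T \<subset> S \<Longrightarrow> esym_commute T" and a: "a \<in> below S u - below S v"
  shows "letter a * esym (below S a) i * (letter a * esym (below S a) j) \<approx>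
         letter a * esym (below S a) j * (letter a * esym (below S a) i)"
proof (rule factors_commute[where z = "esym (below S a)"])
  have aP: "a \<in> P"
    using a subset by (auto simp: below_def)
  show "letter a * esym (below S a) k * letter a \<approx> letter a * letter a * esym (below S a) k" for k
    using aP subset lt_irrefl below_not_above[OF subset aP]
    by (intro letter_pair_passes_esym) (auto simp: below_def)
  have "below S a \<subset> S"
    using a aP lt_irrefl by (auto simp: below_def)
  then show "esym (below S a) i * esym (below S a) j \<approx> esym (below S a) j * esym (below S a) i"
    for i j using IH by (simp add: esym_commute_def)
qed

text \<open>Two distinct \<open>a, b\<close> below \<open>u\<close> but not below \<open>v\<close> are both maximal in the smaller set
  \<open>{a, b} \<union> below S a \<union> below S b\<close>, where the induction hypothesis yields the symmetry of
  the cross terms.\<close>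

lemma esym_lead_only_cross:
  assumes IH: "\<And>T. T \<subset> S \<Longrightarrow> esym_commute T"
    and a: "a \<in> below S u - below S v" and b: "b \<in> below S u - below S v" and ab: "a \<noteq> b"
  shows "letter a * esym (below S a) i * (letter b * esym (below S b) j) +
         letter b * esym (below S b) i * (letter a * esym (below S a) j) \<approx>
         letter a * esym (below S a) j * (letter b * esym (below S b) i) +
         letter b * esym (below S b) j * (letter a * esym (below S a) i)"
proof -
  define T where "T = {a, b} \<union> below S a \<union> below S b"
  have ab_P: "a \<in> P" "b \<in> P" "lt a u" "lt b u"
    using a b subset by (auto simp: below_def)
  have T_below: "T \<subseteq> below S u"
    using a b below_subset_below[OF subset u_in_P] by (auto simp: T_def)
  then have "finite T"
    using finite below_maximal_psubset by (meson finite_subset psubset_imp_subset)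
  have a_max: "\<forall>x\<in>T. \<not> lt a x" and b_max: "\<forall>x\<in>T. \<not> lt b x"
    using only_below_not_below a b T_below by blast+
  have below_T: "below T a = below S a" "below T b = below S b"
    using a_max b_max ab_P(1,2) lt_irrefl by (auto simp: T_def below_def)
  have commute: "esym_commute T'" if "T' \<subseteq> T" for T'
    using IH that T_below below_maximal_psubset by blast
  have "a \<in> T" "b \<in> T"
    by (simp_all add: T_def)
  have "esym_commute T \<longleftrightarrow>
      (\<forall>p q. esym_lead T {a} p * esym_lead T {b} q + esym_lead T {b} p * esym_lead T {a} q \<approx>
        esym_lead T {a} q * esym_lead T {b} p + esym_lead T {b} q * esym_lead T {a} p)"
    by (rule esym_commute_two_maxima_iff)
      (use \<open>finite T\<close> \<open>a \<in> T\<close> \<open>b \<in> T\<close> ab a_max b_max commute in auto)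
  with commute[of T] have
    "\<forall>p q. esym_lead T {a} p * esym_lead T {b} q + esym_lead T {b} p * esym_lead T {a} q \<approx>
      esym_lead T {a} q * esym_lead T {b} p + esym_lead T {b} q * esym_lead T {a} p"
    by blast
  then have "esym_lead T {a} (i + 1) * esym_lead T {b} (j + 1) +
      esym_lead T {b} (i + 1) * esym_lead T {a} (j + 1) \<approx>
      esym_lead T {a} (j + 1) * esym_lead T {b} (i + 1) +
      esym_lead T {b} (j + 1) * esym_lead T {a} (i + 1)"
    by blast
  then show ?thesis
    by (simp add: esym_lead_singleton below_T)
qed

lemma esym_lead_only_commute:
  assumes IH: "\<And>T. T \<subset> S \<Longrightarrow> esym_commute T"
  shows "esym_lead (below S u) (below S u - below S v) i *
           esym_lead (below S u) (below S u - below S v) j \<approx>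
         esym_lead (below S u) (below S u - below S v) j *
           esym_lead (below S u) (below S u - below S v) i"
proof -
  have "finite (below S u - below S v)"
    using finite by (simp add: below_def)
  then show ?thesis
    unfolding esym_lead_only_eq sum_product
  proof (rule pair_sum_cong)
    fix a
    assume a: "a \<in> below S u - below S v"
    show "letter a * esym (below S a) (i - 1) * (letter a * esym (below S a) (j - 1)) \<approx>
        letter a * esym (below S a) (j - 1) * (letter a * esym (below S a) (i - 1))"
      using esym_lead_only_diag[OF IH a, of "i - 1" "j - 1"] .
  next
    fix a b
    assume ab: "a \<in> below S u - below S v" "b \<in> below S u - below S v" "a \<noteq> b"
    show "letter a * esym (below S a) (i - 1) * (letter b * esym (below S b) (j - 1)) +
        letter b * esym (below S b) (i - 1) * (letter a * esym (below S a) (j - 1)) \<approx>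
        letter a * esym (below S a) (j - 1) * (letter b * esym (below S b) (i - 1)) +
        letter b * esym (below S b) (j - 1) * (letter a * esym (below S a) (i - 1))"
      using esym_lead_only_cross[OF IH ab, of "i - 1" "j - 1"] .
  qed
qed

end

sublocale two_maximal \<subseteq> swap: two_maximal P lt S v u
  using finite subset u v distinct u_maximal v_maximal by unfold_locales auto

context two_maximal
begin

lemma below_only_eq:
  "a \<in> below S u - below S v \<Longrightarrow> b \<in> below S v - below S u \<Longrightarrow> below S a = below S b"
  using below_only_subset swap.below_only_subset by blast

lemma esym_lead_only_factor:
  assumes a0: "a0 \<in> below S u - below S v" and b0: "b0 \<in> below S v - below S u"
  shows "esym_lead (below S u) (below S u - below S v) k =
         (\<Sum>a\<in>below S u - below S v. letter a) * esym (below S a0) (k - 1)"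
  unfolding esym_lead_only_eq sum_distrib_right
  by (intro sum.cong refl) (metis below_only_eq a0 b0)

lemma only_letters_pass_esym:
  assumes a0: "a0 \<in> below S u - below S v" and b0: "b0 \<in> below S v - below S u"
  shows "(\<Sum>a\<in>below S u - below S v. letter a) * esym (below S a0) k *
           (\<Sum>b\<in>below S v - below S u. letter b) \<approx>
         (\<Sum>a\<in>below S u - below S v. letter a) * (\<Sum>b\<in>below S v - below S u. letter b) *
           esym (below S a0) k"
proof (rule letter_sums_pass_esym)
  show "below S a0 \<subseteq> P" "below S u - below S v \<subseteq> P" "below S v - below S u \<subseteq> P"
    using subset by (auto simp: below_def)
  fix a b
  assume a: "a \<in> below S u - below S v" and b: "b \<in> below S v - below S u"
  have P: "a \<in> P" "b \<in> P"
    using a b subset by (auto simp: below_def)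
  show "\<not> lt b a"
    using a b P u_in_P lt_trans[of b a u] by (auto simp: below_def)
  fix x
  assume "x \<in> below S a0"
  moreover have "below S a0 = below S a" "below S a0 = below S b"
    using below_only_eq[OF a b0] below_only_eq[OF a0 b0] below_only_eq[OF a0 b] by simp_all
  ultimately show "lt x a \<and> lt x b \<and> \<not> lt b x"
    using below_not_above[OF subset P(2)] by (auto simp: below_def)
qed

lemma esym_lead_product_expand:
  "esym_lead S {u} p * esym_lead S {v} q \<approx>
   (letter u * letter v * esym (below S u \<inter> below S v) (p - 1) +
    letter v * letter u * esym_lead (below S u) (below S u - below S v) (p - 1)) *
   (esym (below S u \<inter> below S v) (q - 1) + esym_lead (below S v) (below S v - below S u) (q - 1))"
proof -
  have "esym_lead S {u} p * esym_lead S {v} q =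
      letter u * esym (below S u) (p - 1) * letter v * esym (below S v) (q - 1)"
    by (simp add: esym_lead_singleton mult.assoc)
  moreover have "esym (below S v) (q - 1) =
      esym (below S u \<inter> below S v) (q - 1) + esym_lead (below S v) (below S v - below S u) (q - 1)"
    using swap.esym_below_maximal_split by (simp add: Int_commute)
  ultimately show ?thesis
    using cong_mult_right[OF maximal_pair_passes_esym_below] by simp
qed

end

context two_maximal
begin

text \<open>The chains below \<open>u\<close> but not below \<open>v\<close> and those below \<open>v\<close> but not below \<open>u\<close> all
  continue in one and the same set, so both parts factor through its \<open>esym\<close>.\<close>

lemma esym_lead_only_mixed:
  assumes IH: "\<And>T. T \<subset> S \<Longrightarrow> esym_commute T"
  shows "esym_lead (below S u) (below S u - below S v) i *
           esym_lead (below S v) (below S v - below S u) j \<approx>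
         esym_lead (below S u) (below S u - below S v) j *
           esym_lead (below S v) (below S v - below S u) i"
proof (cases "below S u - below S v = {} \<or> below S v - below S u = {}")
  case True
  then show ?thesis
    by (elim disjE)
      (simp_all only: esym_lead_def sum.empty mult_zero_left mult_zero_right cong_refl)
next
  case False
  then obtain a0 b0 where a0: "a0 \<in> below S u - below S v" and b0: "b0 \<in> below S v - below S u"
    by blast
  have "below S a0 \<subset> S"
    using a0 subset lt_irrefl by (auto simp: below_def)
  then have "esym (below S a0) i * esym (below S a0) j \<approx> esym (below S a0) j * esym (below S a0) i"
    for i j using IH by (simp add: esym_commute_def)
  then show ?thesis
    unfolding esym_lead_only_factor[OF a0 b0] swap.esym_lead_only_factor[OF b0 a0]
      below_only_eq[OF a0 b0, symmetric]
    by (intro factors_commute[where z = "esym (below S a0)" and i = "i - 1" and j = "j - 1"]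
        only_letters_pass_esym[OF a0 b0])
qed

end

context two_maximal
begin

lemma cross_terms_symmetric:
  assumes IH: "\<And>T. T \<subset> S \<Longrightarrow> esym_commute T"
  shows "esym_lead S {u} p * esym_lead S {v} q + esym_lead S {v} p * esym_lead S {u} q \<approx>
         esym_lead S {u} q * esym_lead S {v} p + esym_lead S {v} q * esym_lead S {u} p"
proof -
  define c where "c = esym (below S u \<inter> below S v)"
  define \<alpha> where "\<alpha> = esym_lead (below S u) (below S u - below S v)"
  define \<beta> where "\<beta> = esym_lead (below S v) (below S v - below S u)"
  define \<Psi> where "\<Psi> i j = (letter u * letter v * c i + letter v * letter u * \<alpha> i) * (c j + \<beta> j) +
      (letter v * letter u * c i + letter u * letter v * \<beta> i) * (c j + \<alpha> j)" for i j
  have expand: "esym_lead S {u} p * esym_lead S {v} q + esym_lead S {v} p * esym_lead S {u} q \<approx>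
      \<Psi> (p - 1) (q - 1)" for p q
    unfolding \<Psi>_def c_def \<alpha>_def \<beta>_def
    using esym_lead_product_expand swap.esym_lead_product_expand
    by (intro cong_add) (simp_all add: Int_commute)
  have "esym_commute (below S u)" "esym_commute (below S v)"
    using IH below_maximal_psubset swap.below_maximal_psubset by blast+
  then have "(c i + \<alpha> i) * (c j + \<alpha> j) \<approx> (c j + \<alpha> j) * (c i + \<alpha> i)"
    and "(c i + \<beta> i) * (c j + \<beta> j) \<approx> (c j + \<beta> j) * (c i + \<beta> i)" for i j
    unfolding c_def \<alpha>_def \<beta>_def esym_commute_def
    by (simp_all add: esym_below_maximal_split swap.esym_below_maximal_split Int_commute)
  then have "\<Psi> i j \<approx> \<Psi> j i" for i j
    unfolding \<Psi>_def
    by (rule cross_form_symmetric)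
      (use IH in \<open>simp_all add: \<alpha>_def \<beta>_def esym_lead_only_commute swap.esym_lead_only_commute
        esym_lead_only_mixed swap.esym_lead_only_mixed\<close>)
  then show ?thesis
    using expand[of p q] expand[of q p] by (meson cong_sym cong_trans)
qed

lemma esym_commute_two_maximal:
  assumes IH: "\<And>T. T \<subset> S \<Longrightarrow> esym_commute T"
  shows "esym_commute S"
proof -
  have "esym_commute (S - {u})" "esym_commute (S - {v})" "esym_commute (S - {u, v})"
    using u v by (auto intro!: IH)
  then show ?thesis
    using esym_commute_two_maxima_iff[OF finite u v distinct u_maximal v_maximal]
      cross_terms_symmetric[OF IH] by blast
qed

end

section \<open>Commutation of the elementary symmetric functions\<close>

context plac_31free
begin

lemma esym_commute_finite:
  assumes "finite S" "S \<subseteq> P"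
  shows "esym_commute S"
  using assms
proof (induction S rule: finite_psubset_induct)
  case (psubset S)
  have IH: "esym_commute T" if "T \<subset> S" for T
    using psubset that by blast
  show ?case
  proof (cases "S = {}")
    case True
    then show ?thesis
      by (simp add: esym_commute_def esym_empty)
  next
    case False
    then obtain u where u: "u \<in> S" "\<forall>x\<in>S. \<not> lt u x"
      using exists_maximal_above[OF psubset.hyps psubset.prems] by blast
    show ?thesis
    proof (cases "\<forall>x\<in>S - {u}. lt x u")
      case True
      have "S - {u} \<subset> S"
        using u by blast
      then show ?thesis
        using esym_commute_maximum[OF psubset.hyps psubset.prems u(1) True] IH by blast
    next
      case False
      then obtain y where y: "y \<in> S" "y \<noteq> u" "\<not> lt y u"
        by blast
      then obtain v where v: "v \<in> S" "v = y \<or> lt y v" "\<forall>x\<in>S. \<not> lt v x"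
        using exists_maximal_above[OF psubset.hyps psubset.prems] by blast
      then have "two_maximal P lt S u v"
        using psubset.hyps psubset.prems u y by unfold_locales auto
      then show ?thesis
        using IH by (rule two_maximal.esym_commute_two_maximal)
    qed
  qed
qed

end

theorem mainTheorem1:
  fixes P :: "'a set" and lt :: "'a \<Rightarrow> 'a \<Rightarrow> bool" and k l :: int and S :: "'a set"
  assumes "finite P" and "strict_poset P lt" and "three_one_free P lt" and "S \<subseteq> P"
  shows "nc_sub (nc_mult (elem_sym lt k S) (elem_sym lt l S))
                (nc_mult (elem_sym lt l S) (elem_sym lt k S)) \<in> I_plac P lt"
proof -
  interpret plac_31free P lt
    using assms(2,3) by unfold_locales
  have "finite S"
    using assms(1,4) by (rule finite_subset[rotated])
  then have "esym S k * esym S l - esym S l * esym S k \<in> plac_ideal P lt"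
    using esym_commute_finite assms(4) by (simp add: esym_commute_def cong_def)
  then have "coeff_fun (esym S k * esym S l - esym S l * esym S k) \<in> I_plac P lt"
    by (rule coeff_fun_plac_ideal)
  then show ?thesis
    using \<open>finite S\<close> by (simp add: coeff_fun_diff coeff_fun_mult coeff_fun_esym)
qed

end
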